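(* Let $\beta>0$, $\bar\mu\in\mathbb{R}^{N\times p}$, $g\in C^3(\mathbb{R})$, $m=g\circ G_\beta$, and for indices $k=(k_1,k_2,k_3)\in[N]^3$, $j=(j_1,j_2,j_3)\in[p]^3$ and $x\in\mathbb{R}^{N\times p}$ define $$U_{(k,j)}(x)=\sup\Big\{\Big|\frac{\partial^3m}{\partial X_{k_1j_1}\partial X_{k_2j_2}\partial X_{k_3j_3}}(x+y)\Big|:y\in\mathbb{R}^{N\times p},\ \|y\|_\infty\le\beta^{-1}\Big\}.$$ Then for every $x\in\mathbb{R}^{N\times p}$, $$\sum_{(k,j)\in[N]^3\times[p]^3}U_{(k,j)}(x)\le e^{12}\{\|g'''\|_\infty+16\beta\|g''\|_\infty+24\beta^2\|g'\|_\infty\}.$$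
   Context: For $k\in[N]$ and $v\in\mathbb{R}^p$, $F_{\beta,\bar\mu_k}(v)=\beta^{-1}\log\big(\sum_{j=1}^p\exp(\beta\{v_j+\bar\mu_{kj}\})\big)$; for $X\in\mathbb{R}^{N\times p}$ with rows $X_{1\cdot},\dots,X_{N\cdot}$, $F_{\beta,\bar\mu}(X)=(F_{\beta,\bar\mu_1}(X_{1\cdot}),\dots,F_{\beta,\bar\mu_N}(X_{N\cdot}))'\in\mathbb{R}^N$; for $u\in\mathbb{R}^N$, $F_{\beta,0}(u)=\beta^{-1}\log\sum_{k=1}^N\exp(\beta u_k)$; $G_\beta(X)=-F_{\beta,0}(-F_{\beta,\bar\mu}(X))$. $\|y\|_\infty=\max_{k,j}|y_{kj}|$ and $\|g^{(r)}\|_\infty=\sup_t|g^{(r)}(t)|$. *)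

theory Defs
  imports "HOL-Analysis.Analysis" "HOL-Library.Extended_Real"
begin

text \<open>Matrices in R^{N x p} are represented as real^'p^'n, with row index type 'n (|'n| = N)
  and column index type 'p (|'p| = p).\<close>

definition F_row :: "real \<Rightarrow> real^'p \<Rightarrow> real^'p \<Rightarrow> real" where
  "F_row \<beta> mu v = (1/\<beta>) * ln (\<Sum>j\<in>UNIV. exp (\<beta> * (v$j + mu$j)))"

definition F_mat :: "real \<Rightarrow> real^'p^'n \<Rightarrow> real^'p^'n \<Rightarrow> real^'n" where
  "F_mat \<beta> mu X = (\<chi> k. F_row \<beta> (mu$k) (X$k))"

definition F_zero :: "real \<Rightarrow> real^'n \<Rightarrow> real" where
  "F_zero \<beta> u = (1/\<beta>) * ln (\<Sum>k\<in>UNIV. exp (\<beta> * u$k))"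

definition G_beta :: "real \<Rightarrow> real^'p^'n \<Rightarrow> real^'p^'n \<Rightarrow> real" where
  "G_beta \<beta> mu X = - F_zero \<beta> (- F_mat \<beta> mu X)"

definition unit_mat :: "'n \<Rightarrow> 'p \<Rightarrow> real^'p^'n" where
  "unit_mat k j = (\<chi> a b. if a = k \<and> b = j then 1 else 0)"

definition pd :: "(real^'p^'n \<Rightarrow> real) \<Rightarrow> 'n \<Rightarrow> 'p \<Rightarrow> real^'p^'n \<Rightarrow> real" where
  "pd f k j X = deriv (\<lambda>t. f (X + t *\<^sub>R unit_mat k j)) 0"

definition supnorm_mat :: "real^'p^'n \<Rightarrow> real" where
  "supnorm_mat y = Max {\<bar>y$k$j\<bar> | k j. True}"

definition C3 :: "(real \<Rightarrow> real) \<Rightarrow> bool" where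
  "C3 g \<longleftrightarrow> (\<forall>i<3. \<forall>t. ((deriv ^^ i) g has_real_derivative (deriv ^^ Suc i) g t) (at t))
            \<and> continuous_on UNIV ((deriv ^^ 3) g)"

definition supnorm_deriv :: "nat \<Rightarrow> (real \<Rightarrow> real) \<Rightarrow> ereal" where
  "supnorm_deriv r g = (SUP t. ereal \<bar>(deriv ^^ r) g t\<bar>)"

end

theory Submission
  imports Defs
begin

text \<open>
  With S_k = sum_j exp (beta (X_kj + mu_kj)) and T = sum_k 1 / S_k we have G = - ln T / beta, and
  the gradient q_kj = exp (beta (X_kj + mu_kj)) / (T S_k^2) of G is a probability distribution
  on the entries. Differentiating q (or the row softmax p) once more multiplies it by beta times a
  factor bounded in absolute value by a nonnegative kernel of total mass 4 (resp. 2). Hence every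
  third partial derivative of g o G is dominated by a cubic form in q, p and these kernels, whose
  sum over all indices is M3 + 12 beta M2 + 24 beta^2 M1 when M_r bounds the r-th derivative of g.
  A perturbation y with entries at most 1/beta changes each exponential weight by a factor in
  [1/e, e], hence q, p and the kernels by a factor at most e^4 and the cubic form by at most e^12.
\<close>

definition weight :: "real \<Rightarrow> real^'p^'n \<Rightarrow> real^'p^'n \<Rightarrow> 'n \<Rightarrow> 'p \<Rightarrow> real" where
  "weight b mu X k j = exp (b * (X$k$j + mu$k$j))"

definition row_sum :: "real \<Rightarrow> real^'p^'n \<Rightarrow> real^'p^'n \<Rightarrow> 'n \<Rightarrow> real" where
  "row_sum b mu X k = (\<Sum>j\<in>UNIV. weight b mu X k j)"

definition row_prob :: "real \<Rightarrow> real^'p^'n \<Rightarrow> real^'p^'n \<Rightarrow> 'n \<Rightarrow> 'p \<Rightarrow> real" where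
  "row_prob b mu X k j = weight b mu X k j / row_sum b mu X k"

definition partition_sum :: "real \<Rightarrow> real^'p^'n \<Rightarrow> real^'p^'n \<Rightarrow> real" where
  "partition_sum b mu X = (\<Sum>k\<in>UNIV. 1 / row_sum b mu X k)"

definition grad_G :: "real \<Rightarrow> real^'p^'n \<Rightarrow> real^'p^'n \<Rightarrow> 'n \<Rightarrow> 'p \<Rightarrow> real" where
  "grad_G b mu X k j = weight b mu X k j / (partition_sum b mu X * (row_sum b mu X k)\<^sup>2)"

lemma weight_pos: "0 < weight b mu X k j"
  by (simp add: weight_def)

lemma row_sum_pos: "0 < row_sum b mu X k"
  unfolding row_sum_def by (rule sum_pos) (auto simp: weight_pos)

lemma partition_sum_pos: "0 < partition_sum b mu X"
  unfolding partition_sum_def by (rule sum_pos) (auto simp: row_sum_pos)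

lemma row_prob_nonneg: "0 \<le> row_prob b mu X k j"
  using weight_pos[of b mu X k j] row_sum_pos[of b mu X k] by (simp add: row_prob_def)

lemma grad_G_nonneg: "0 \<le> grad_G b mu X k j"
  using weight_pos[of b mu X k j] row_sum_pos[of b mu X k] partition_sum_pos[of b mu X]
  by (simp add: grad_G_def)

lemma sum_row_prob: "(\<Sum>j\<in>UNIV. row_prob b mu X k j) = 1"
  using row_sum_pos[of b mu X k] by (simp add: row_prob_def row_sum_def flip: sum_divide_distrib)

lemma sum_grad_G: "(\<Sum>k\<in>UNIV. \<Sum>j\<in>UNIV. grad_G b mu X k j) = 1"
proof -
  have "(\<Sum>j\<in>UNIV. grad_G b mu X k j) = (1 / row_sum b mu X k) / partition_sum b mu X" for k
    using row_sum_pos[of b mu X k]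
    by (simp add: grad_G_def row_sum_def power2_eq_square field_simps flip: sum_divide_distrib)
  then have "(\<Sum>k\<in>UNIV. \<Sum>j\<in>UNIV. grad_G b mu X k j)
      = (\<Sum>k\<in>UNIV. 1 / row_sum b mu X k) / partition_sum b mu X"
    by (simp only: sum_divide_distrib)
  then show ?thesis
    using partition_sum_pos[of b mu X] by (simp add: partition_sum_def)
qed

lemma G_beta_eq_ln_partition_sum: "b \<noteq> 0 \<Longrightarrow> G_beta b mu X = - ln (partition_sum b mu X) / b"
proof -
  assume "b \<noteq> 0"
  then have "exp (b * (- F_mat b mu X) $ k) = 1 / row_sum b mu X k" for k
    using row_sum_pos[of b mu X k]
    by (simp add: F_mat_def F_row_def row_sum_def weight_def exp_minus inverse_eq_divide)
  then show ?thesis by (simp add: G_beta_def F_zero_def partition_sum_def)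
qed

lemma vec_nth_add_scaleR_unit_mat: "(X + t *\<^sub>R unit_mat a c)$k$j = X$k$j + t * of_bool (k = a \<and> j = c)"
  by (simp add: unit_mat_def)

lemma weight_deriv:
  "((\<lambda>t. weight b mu (X + t *\<^sub>R unit_mat a c) k j) has_real_derivative
     of_bool (k = a \<and> j = c) * (b * weight b mu X k j)) (at 0)"
  unfolding weight_def vec_nth_add_scaleR_unit_mat by (auto intro!: derivative_eq_intros)

lemma row_sum_deriv:
  "((\<lambda>t. row_sum b mu (X + t *\<^sub>R unit_mat a c) k) has_real_derivative
     of_bool (k = a) * (b * weight b mu X a c)) (at 0)"
proof -
  have "((\<lambda>t. row_sum b mu (X + t *\<^sub>R unit_mat a c) k) has_real_derivative
      (\<Sum>j\<in>UNIV. of_bool (k = a \<and> j = c) * (b * weight b mu X k j))) (at 0)"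
    unfolding row_sum_def by (intro DERIV_sum weight_deriv)
  then show ?thesis by (cases "k = a") simp_all
qed

lemma partition_sum_deriv:
  "((\<lambda>t. partition_sum b mu (X + t *\<^sub>R unit_mat a c)) has_real_derivative
     - b * partition_sum b mu X * grad_G b mu X a c) (at 0)"
proof -
  have "((\<lambda>t. 1 / row_sum b mu (X + t *\<^sub>R unit_mat a c) k) has_real_derivative
      (if k = a then - b * weight b mu X a c / (row_sum b mu X a)\<^sup>2 else 0)) (at 0)" for k
    by (rule derivative_eq_intros row_sum_deriv refl | simp add: row_sum_pos[THEN less_imp_neq[symmetric]])+
      (cases "k = a"; simp add: power2_eq_square)
  then have "((\<lambda>t. partition_sum b mu (X + t *\<^sub>R unit_mat a c)) has_real_derivative
      - b * weight b mu X a c / (row_sum b mu X a)\<^sup>2) (at 0)"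
    unfolding partition_sum_def by (rule DERIV_sum[THEN DERIV_cong]) simp_all
  then show ?thesis
    using partition_sum_pos[of b mu X] by (simp add: grad_G_def field_simps)
qed

lemma G_beta_deriv:
  assumes "b \<noteq> 0"
  shows "((\<lambda>t. G_beta b mu (X + t *\<^sub>R unit_mat a c)) has_real_derivative grad_G b mu X a c) (at 0)"
proof -
  have "((\<lambda>t. ln (partition_sum b mu (X + t *\<^sub>R unit_mat a c))) has_real_derivative
      - b * grad_G b mu X a c) (at 0)"
    by (rule derivative_eq_intros partition_sum_deriv refl | simp add: partition_sum_pos)+
      (use partition_sum_pos[of b mu X] in simp)
  from DERIV_cdivide[OF DERIV_minus[OF this], of b] show ?thesis
    using assms by (simp add: G_beta_eq_ln_partition_sum)
qed

definition dlog_row_prob :: "real \<Rightarrow> real^'p^'n \<Rightarrow> real^'p^'n \<Rightarrow> 'n \<Rightarrow> 'p \<Rightarrow> 'n \<Rightarrow> 'p \<Rightarrow> real" where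
  "dlog_row_prob b mu X k j a c = of_bool (k = a \<and> j = c) - of_bool (k = a) * row_prob b mu X a c"

definition dlog_grad_G :: "real \<Rightarrow> real^'p^'n \<Rightarrow> real^'p^'n \<Rightarrow> 'n \<Rightarrow> 'p \<Rightarrow> 'n \<Rightarrow> 'p \<Rightarrow> real" where
  "dlog_grad_G b mu X k j a c =
     of_bool (k = a \<and> j = c) - 2 * of_bool (k = a) * row_prob b mu X a c + grad_G b mu X a c"

lemma row_prob_deriv:
  "((\<lambda>t. row_prob b mu (X + t *\<^sub>R unit_mat a c) k j) has_real_derivative
     b * row_prob b mu X k j * dlog_row_prob b mu X k j a c) (at 0)"
  unfolding row_prob_def
  by (rule derivative_eq_intros weight_deriv row_sum_deriv | simp add: row_sum_pos[THEN less_imp_neq[symmetric]])+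
    (cases "k = a"; simp add: dlog_row_prob_def row_prob_def field_simps
      row_sum_pos[THEN less_imp_neq[symmetric]])

lemma grad_G_deriv:
  "((\<lambda>t. grad_G b mu (X + t *\<^sub>R unit_mat a c) k j) has_real_derivative
     b * grad_G b mu X k j * dlog_grad_G b mu X k j a c) (at 0)"
  unfolding grad_G_def
  by (rule derivative_eq_intros weight_deriv row_sum_deriv partition_sum_deriv
      | simp add: row_sum_pos[THEN less_imp_neq[symmetric]] partition_sum_pos[THEN less_imp_neq[symmetric]])+
    (cases "k = a"; simp add: dlog_grad_G_def row_prob_def grad_G_def field_simps power2_eq_square
      row_sum_pos[THEN less_imp_neq[symmetric]] partition_sum_pos[THEN less_imp_neq[symmetric]])

lemma dlog_grad_G_deriv:
  "((\<lambda>t. dlog_grad_G b mu (X + t *\<^sub>R unit_mat e f) k j a c) has_real_derivative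
     b * (grad_G b mu X a c * dlog_grad_G b mu X a c e f
          - 2 * of_bool (k = a) * row_prob b mu X a c * dlog_row_prob b mu X a c e f)) (at 0)"
proof -
  have "dlog_grad_G b mu Y k j a c
      = of_bool (k = a \<and> j = c) - 2 * of_bool (k = a) * row_prob b mu Y a c + grad_G b mu Y a c" for Y
    by (simp add: dlog_grad_G_def)
  then show ?thesis
    by (simp only:) (rule derivative_eq_intros row_prob_deriv grad_G_deriv refl | simp add: algebra_simps)+
qed

lemma pd_eqI:
  assumes "\<And>X. ((\<lambda>t. F (X + t *\<^sub>R unit_mat a c)) has_real_derivative F' X) (at 0)"
  shows "pd F a c = F'"
  using assms by (auto simp: pd_def fun_eq_iff intro: DERIV_imp_deriv)

lemma deriv_iter_G_beta_deriv:
  assumes "C3 g" "b \<noteq> 0" "i < 3"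
  shows "((\<lambda>t. (deriv ^^ i) g (G_beta b mu (X + t *\<^sub>R unit_mat a c))) has_real_derivative
     (deriv ^^ Suc i) g (G_beta b mu X) * grad_G b mu X a c) (at 0)"
proof -
  have "((deriv ^^ i) g has_real_derivative (deriv ^^ Suc i) g (G_beta b mu X))
      (at (G_beta b mu (X + 0 *\<^sub>R unit_mat a c)))"
    using assms(1,3) unfolding C3_def by simp
  from DERIV_chain2[OF this G_beta_deriv[OF assms(2)]] show ?thesis by simp
qed

lemma pd3_comp_G_beta:
  fixes mu :: "real^'p^'n" and a1 a2 a3 :: 'n and c1 c2 c3 :: 'p
  assumes "C3 g" "b \<noteq> 0"
  defines "q \<equiv> grad_G b mu" and "L \<equiv> dlog_grad_G b mu" and "d r \<equiv> (deriv ^^ r) g \<circ> G_beta b mu"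
  shows "pd (pd (pd (g \<circ> G_beta b mu) a3 c3) a2 c2) a1 c1 = (\<lambda>X.
      d 3 X * q X a1 c1 * q X a2 c2 * q X a3 c3
    + b * d 2 X * (q X a2 c2 * q X a3 c3 * (L X a2 c2 a1 c1 + L X a3 c3 a1 c1)
                   + q X a1 c1 * q X a3 c3 * L X a3 c3 a2 c2)
    + b\<^sup>2 * d 1 X * q X a3 c3 * (L X a3 c3 a1 c1 * L X a3 c3 a2 c2 + q X a2 c2 * L X a2 c2 a1 c1
                   - 2 * of_bool (a3 = a2) * row_prob b mu X a2 c2 * dlog_row_prob b mu X a2 c2 a1 c1))"
    (is "_ = ?rhs")
proof -
  note D = deriv_iter_G_beta_deriv[OF assms(1,2)]
  have "pd (g \<circ> G_beta b mu) a3 c3 = (\<lambda>X. d 1 X * q X a3 c3)"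
    by (rule pd_eqI) (use D[of 0] in \<open>simp add: d_def q_def o_def\<close>)
  moreover have "pd (\<lambda>X. d 1 X * q X a3 c3) a2 c2
      = (\<lambda>X. d 2 X * q X a2 c2 * q X a3 c3 + b * d 1 X * q X a3 c3 * L X a3 c3 a2 c2)"
    unfolding d_def q_def L_def o_def
    by (rule pd_eqI, (rule D grad_G_deriv derivative_eq_intros refl | (simp; fail))+)
      (simp_all add: algebra_simps numeral_2_eq_2)
  moreover have "pd (\<lambda>X. d 2 X * q X a2 c2 * q X a3 c3 + b * d 1 X * q X a3 c3 * L X a3 c3 a2 c2) a1 c1
      = ?rhs"
    unfolding d_def q_def L_def o_def
    by (rule pd_eqI, (rule D grad_G_deriv dlog_grad_G_deriv derivative_eq_intros refl | (simp; fail))+)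
      (simp_all add: algebra_simps power2_eq_square numeral_2_eq_2 numeral_3_eq_3)
  ultimately show ?thesis by simp
qed

definition dlog_row_prob_bound :: "real \<Rightarrow> real^'p^'n \<Rightarrow> real^'p^'n \<Rightarrow> 'n \<Rightarrow> 'p \<Rightarrow> 'n \<Rightarrow> 'p \<Rightarrow> real" where
  "dlog_row_prob_bound b mu X k j a c = of_bool (k = a \<and> j = c) + of_bool (k = a) * row_prob b mu X a c"

definition dlog_grad_G_bound :: "real \<Rightarrow> real^'p^'n \<Rightarrow> real^'p^'n \<Rightarrow> 'n \<Rightarrow> 'p \<Rightarrow> 'n \<Rightarrow> 'p \<Rightarrow> real" where
  "dlog_grad_G_bound b mu X k j a c =
     of_bool (k = a \<and> j = c) + 2 * of_bool (k = a) * row_prob b mu X a c + grad_G b mu X a c"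

lemma abs_dlog_row_prob_le: "\<bar>dlog_row_prob b mu X k j a c\<bar> \<le> dlog_row_prob_bound b mu X k j a c"
  using row_prob_nonneg[of b mu X a c]
  by (simp add: dlog_row_prob_def dlog_row_prob_bound_def abs_le_iff)

lemma abs_dlog_grad_G_le: "\<bar>dlog_grad_G b mu X k j a c\<bar> \<le> dlog_grad_G_bound b mu X k j a c"
  using row_prob_nonneg[of b mu X a c] grad_G_nonneg[of b mu X a c]
  by (simp add: dlog_grad_G_def dlog_grad_G_bound_def abs_le_iff)

lemma sum_dlog_row_prob_bound: "(\<Sum>a\<in>UNIV. \<Sum>c\<in>UNIV. dlog_row_prob_bound b mu X k j a c) = 2"
  by (simp add: dlog_row_prob_bound_def sum.distrib sum_row_prob of_bool_conj flip: sum_distrib_left)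

lemma sum_dlog_grad_G_bound: "(\<Sum>a\<in>UNIV. \<Sum>c\<in>UNIV. dlog_grad_G_bound b mu X k j a c) = 4"
  by (simp add: dlog_grad_G_bound_def sum.distrib sum_row_prob sum_grad_G of_bool_conj mult.assoc
      flip: sum_distrib_left)

text \<open>
  The majorant is the formula of pd3_comp_G_beta with g^(r) replaced by M_r and the signed factors
  by their absolute bounds; keeping q, p and the kernels R, H abstract makes its monotonicity,
  homogeneity and total mass purely algebraic facts.
\<close>

definition pd3_majorant ::
  "real \<Rightarrow> real \<Rightarrow> real \<Rightarrow> real \<Rightarrow> ('n \<Rightarrow> 'p \<Rightarrow> real) \<Rightarrow> ('n \<Rightarrow> 'p \<Rightarrow> real) \<Rightarrow>
   ('n \<Rightarrow> 'p \<Rightarrow> 'n \<Rightarrow> 'p \<Rightarrow> real) \<Rightarrow> ('n \<Rightarrow> 'p \<Rightarrow> 'n \<Rightarrow> 'p \<Rightarrow> real) \<Rightarrow>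
   'n \<Rightarrow> 'p \<Rightarrow> 'n \<Rightarrow> 'p \<Rightarrow> 'n \<Rightarrow> 'p \<Rightarrow> real" where
  "pd3_majorant M1 M2 M3 b q p R H a1 c1 a2 c2 a3 c3 =
      M3 * (q a1 c1 * q a2 c2 * q a3 c3)
    + b * M2 * (q a2 c2 * q a3 c3 * (R a2 c2 a1 c1 + R a3 c3 a1 c1) + q a1 c1 * q a3 c3 * R a3 c3 a2 c2)
    + b\<^sup>2 * M1 * (q a3 c3 * (R a3 c3 a1 c1 * R a3 c3 a2 c2 + q a2 c2 * R a2 c2 a1 c1
                              + 2 * of_bool (a3 = a2) * p a2 c2 * H a2 c2 a1 c1))"

abbreviation pd3_majorant_G ::
  "real \<Rightarrow> real \<Rightarrow> real \<Rightarrow> real \<Rightarrow> real^'p^'n \<Rightarrow> real^'p^'n \<Rightarrow> 'n \<Rightarrow> 'p \<Rightarrow> 'n \<Rightarrow> 'p \<Rightarrow> 'n \<Rightarrow> 'p \<Rightarrow> real"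
  where "pd3_majorant_G M1 M2 M3 b mu X \<equiv> pd3_majorant M1 M2 M3 b (grad_G b mu X) (row_prob b mu X)
      (dlog_grad_G_bound b mu X) (dlog_row_prob_bound b mu X)"

lemma abs_mult_le_mult: "\<bar>x\<bar> \<le> M \<Longrightarrow> \<bar>y\<bar> \<le> Y \<Longrightarrow> \<bar>x * y\<bar> \<le> M * (Y::real)"
  unfolding abs_mult by (rule mult_mono') auto

lemma abs_pd3_comp_G_beta_le:
  fixes mu :: "real^'p^'n"
  assumes "C3 g" "b > 0"
    and M3: "\<And>t. \<bar>(deriv ^^ 3) g t\<bar> \<le> M3" and M2: "\<And>t. \<bar>(deriv ^^ 2) g t\<bar> \<le> M2"
    and M1: "\<And>t. \<bar>(deriv ^^ 1) g t\<bar> \<le> M1"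
  shows "\<bar>pd (pd (pd (g \<circ> G_beta b mu) a3 c3) a2 c2) a1 c1 X\<bar>
    \<le> pd3_majorant_G M1 M2 M3 b mu X a1 c1 a2 c2 a3 c3"
proof -
  let ?q = "grad_G b mu X" and ?p = "row_prob b mu X" and ?L = "dlog_grad_G b mu X"
    and ?R = "dlog_grad_G_bound b mu X" and ?Lp = "dlog_row_prob b mu X" and ?H = "dlog_row_prob_bound b mu X"
  let ?d = "\<lambda>r. (deriv ^^ r) g (G_beta b mu X)"
  have q: "0 \<le> ?q a c" for a c by (rule grad_G_nonneg)
  note L = abs_dlog_grad_G_le[of b mu X] and Lp = abs_dlog_row_prob_le[of b mu X]
  have B3: "\<bar>?q a1 c1 * ?q a2 c2 * ?q a3 c3\<bar> \<le> ?q a1 c1 * ?q a2 c2 * ?q a3 c3"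
    using q by simp
  have B2: "\<bar>?q a2 c2 * ?q a3 c3 * (?L a2 c2 a1 c1 + ?L a3 c3 a1 c1) + ?q a1 c1 * ?q a3 c3 * ?L a3 c3 a2 c2\<bar>
      \<le> ?q a2 c2 * ?q a3 c3 * (?R a2 c2 a1 c1 + ?R a3 c3 a1 c1) + ?q a1 c1 * ?q a3 c3 * ?R a3 c3 a2 c2"
    by (intro order_trans[OF abs_triangle_ineq] add_mono abs_mult_le_mult order_trans[OF abs_triangle_ineq])
      (simp_all add: abs_mult q L)
  have B1: "\<bar>?q a3 c3 * (?L a3 c3 a1 c1 * ?L a3 c3 a2 c2 + ?q a2 c2 * ?L a2 c2 a1 c1
              - 2 * of_bool (a3 = a2) * ?p a2 c2 * ?Lp a2 c2 a1 c1)\<bar>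
      \<le> ?q a3 c3 * (?R a3 c3 a1 c1 * ?R a3 c3 a2 c2 + ?q a2 c2 * ?R a2 c2 a1 c1
              + 2 * of_bool (a3 = a2) * ?p a2 c2 * ?H a2 c2 a1 c1)"
    by (intro abs_mult_le_mult order_trans[OF abs_triangle_ineq4] order_trans[OF abs_triangle_ineq] add_mono)
      (simp_all add: abs_mult q L Lp row_prob_nonneg mult.assoc)
  have "\<bar>pd (pd (pd (g \<circ> G_beta b mu) a3 c3) a2 c2) a1 c1 X\<bar>
      = \<bar>?d 3 * (?q a1 c1 * ?q a2 c2 * ?q a3 c3)
      + b * (?d 2 * (?q a2 c2 * ?q a3 c3 * (?L a2 c2 a1 c1 + ?L a3 c3 a1 c1)
                     + ?q a1 c1 * ?q a3 c3 * ?L a3 c3 a2 c2))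
      + b\<^sup>2 * (?d 1 * (?q a3 c3 * (?L a3 c3 a1 c1 * ?L a3 c3 a2 c2 + ?q a2 c2 * ?L a2 c2 a1 c1
                     - 2 * of_bool (a3 = a2) * ?p a2 c2 * ?Lp a2 c2 a1 c1)))\<bar>"
    using assms(2) by (simp add: pd3_comp_G_beta[OF assms(1)] mult.assoc)
  also have "\<dots> \<le> M3 * (?q a1 c1 * ?q a2 c2 * ?q a3 c3)
      + b * (M2 * (?q a2 c2 * ?q a3 c3 * (?R a2 c2 a1 c1 + ?R a3 c3 a1 c1)
                   + ?q a1 c1 * ?q a3 c3 * ?R a3 c3 a2 c2))
      + b\<^sup>2 * (M1 * (?q a3 c3 * (?R a3 c3 a1 c1 * ?R a3 c3 a2 c2 + ?q a2 c2 * ?R a2 c2 a1 c1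
                     + 2 * of_bool (a3 = a2) * ?p a2 c2 * ?H a2 c2 a1 c1)))"
    using assms(2)
    by (intro order_trans[OF abs_triangle_ineq] add_mono abs_mult_le_mult M1 M2 M3 B1 B2 B3)
      (simp_all add: abs_mult)
  also have "\<dots> = pd3_majorant M1 M2 M3 b ?q ?p ?R ?H a1 c1 a2 c2 a3 c3"
    by (simp add: pd3_majorant_def mult.assoc)
  finally show ?thesis .
qed

lemma pd3_majorant_mono:
  assumes "0 \<le> b" "0 \<le> M1" "0 \<le> M2" "0 \<le> M3"
    and "\<And>a c. 0 \<le> q' a c" "\<And>a c. q' a c \<le> q a c"
    and "\<And>a c. 0 \<le> p' a c" "\<And>a c. p' a c \<le> p a c"
    and "\<And>k j a c. 0 \<le> R' k j a c" "\<And>k j a c. R' k j a c \<le> R k j a c"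
    and "\<And>k j a c. 0 \<le> H' k j a c" "\<And>k j a c. H' k j a c \<le> H k j a c"
  shows "pd3_majorant M1 M2 M3 b q' p' R' H' a1 c1 a2 c2 a3 c3
    \<le> pd3_majorant M1 M2 M3 b q p R H a1 c1 a2 c2 a3 c3"
  unfolding pd3_majorant_def
  by (intro add_mono mult_left_mono mult_mono' order.refl) (auto simp: assms)

lemma pd3_majorant_scale:
  "pd3_majorant M1 M2 M3 b (\<lambda>a c. s * q a c) (\<lambda>a c. s * p a c) (\<lambda>k j a c. s * R k j a c)
     (\<lambda>k j a c. s * H k j a c) a1 c1 a2 c2 a3 c3
   = s ^ 3 * pd3_majorant M1 M2 M3 b q p R H a1 c1 a2 c2 a3 c3"
  by (simp add: pd3_majorant_def algebra_simps power2_eq_square power3_eq_cube)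

lemma sum_pd3_majorant:
  fixes q p :: "'n::finite \<Rightarrow> 'p::finite \<Rightarrow> real"
  assumes q: "(\<Sum>a\<in>UNIV. \<Sum>c\<in>UNIV. q a c) = 1" and p: "\<And>k. (\<Sum>c\<in>UNIV. p k c) = 1"
    and R: "\<And>k j. (\<Sum>a\<in>UNIV. \<Sum>c\<in>UNIV. R k j a c) = 4"
    and H: "\<And>k j. (\<Sum>a\<in>UNIV. \<Sum>c\<in>UNIV. H k j a c) = 2"
  shows "(\<Sum>a3\<in>UNIV. \<Sum>c3\<in>UNIV. \<Sum>a2\<in>UNIV. \<Sum>c2\<in>UNIV. \<Sum>a1\<in>UNIV. \<Sum>c1\<in>UNIV.
      pd3_majorant M1 M2 M3 b q p R H a1 c1 a2 c2 a3 c3) = M3 + 12 * b * M2 + 24 * b\<^sup>2 * M1"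
proof -
  have inner: "(\<Sum>a1\<in>UNIV. \<Sum>c1\<in>UNIV. pd3_majorant M1 M2 M3 b q p R H a1 c1 a2 c2 a3 c3)
      = q a2 c2 * ((M3 + 8 * b * M2 + 4 * b\<^sup>2 * M1) * q a3 c3)
      + R a3 c3 a2 c2 * ((b * M2 + 4 * b\<^sup>2 * M1) * q a3 c3)
      + of_bool (a3 = a2) * p a2 c2 * (4 * b\<^sup>2 * M1 * q a3 c3)" for a2 c2 a3 c3
  proof -
    have "pd3_majorant M1 M2 M3 b q p R H a1 c1 a2 c2 a3 c3
        = (M3 * q a2 c2 * q a3 c3 + b * M2 * q a3 c3 * R a3 c3 a2 c2) * q a1 c1
        + (b * M2 * q a2 c2 * q a3 c3 + b\<^sup>2 * M1 * q a3 c3 * q a2 c2) * R a2 c2 a1 c1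
        + (b * M2 * q a2 c2 * q a3 c3 + b\<^sup>2 * M1 * q a3 c3 * R a3 c3 a2 c2) * R a3 c3 a1 c1
        + (2 * b\<^sup>2 * M1 * q a3 c3 * of_bool (a3 = a2) * p a2 c2) * H a2 c2 a1 c1" for a1 c1
      by (simp add: pd3_majorant_def algebra_simps)
    then show ?thesis
      by (simp add: sum.distrib q R H algebra_simps flip: sum_distrib_left sum_distrib_right)
  qed
  have middle: "(\<Sum>a2\<in>UNIV. \<Sum>c2\<in>UNIV. \<Sum>a1\<in>UNIV. \<Sum>c1\<in>UNIV.
      pd3_majorant M1 M2 M3 b q p R H a1 c1 a2 c2 a3 c3) = (M3 + 12 * b * M2 + 24 * b\<^sup>2 * M1) * q a3 c3"
    for a3 c3
    by (simp add: inner sum.distrib q R p mult.assoc flip: sum_distrib_left sum_distrib_right)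
      (simp add: algebra_simps)
  show ?thesis
    by (simp add: middle q flip: sum_distrib_left)
qed

lemma abs_entry_le_supnorm_mat: "\<bar>y$k$j\<bar> \<le> supnorm_mat y"
proof -
  have "finite {\<bar>y$k$j\<bar> | k j. True}"
    using finite_image_set2[of "\<lambda>_. True" "\<lambda>_. True" "\<lambda>k j. \<bar>y$k$j\<bar>"] by simp
  then show ?thesis unfolding supnorm_mat_def by (rule Max_ge) auto
qed

lemma supnorm_mat_zero [simp]: "supnorm_mat 0 = 0"
  by (simp add: supnorm_mat_def)

lemma supnorm_mat_uminus [simp]: "supnorm_mat (- y) = supnorm_mat y"
  by (simp add: supnorm_mat_def)

lemma weight_perturb_le:
  assumes "b > 0" "supnorm_mat y \<le> 1 / b"
  shows "weight b mu (X + y) k j \<le> exp 1 * weight b mu X k j"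
proof -
  have "b * y$k$j \<le> b * supnorm_mat y"
    using assms(1) abs_entry_le_supnorm_mat[of y k j] by (intro mult_left_mono) auto
  also have "\<dots> \<le> 1"
    using assms by (simp add: field_simps)
  finally show ?thesis
    by (simp add: weight_def algebra_simps flip: exp_add)
qed

lemma row_sum_perturb_le:
  assumes "b > 0" "supnorm_mat y \<le> 1 / b"
  shows "row_sum b mu (X + y) k \<le> exp 1 * row_sum b mu X k"
  unfolding row_sum_def sum_distrib_left by (intro sum_mono weight_perturb_le assms)

lemma row_sum_perturb_ge:
  assumes "b > 0" "supnorm_mat y \<le> 1 / b"
  shows "row_sum b mu X k \<le> exp 1 * row_sum b mu (X + y) k"
  using row_sum_perturb_le[of b "- y" mu "X + y" k] assms by simp

lemma partition_sum_perturb_ge: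
  assumes "b > 0" "supnorm_mat y \<le> 1 / b"
  shows "partition_sum b mu X \<le> exp 1 * partition_sum b mu (X + y)"
  unfolding partition_sum_def sum_distrib_left
proof (rule sum_mono)
  fix k
  show "1 / row_sum b mu X k \<le> exp 1 * (1 / row_sum b mu (X + y) k)"
    using row_sum_perturb_le[OF assms, of mu X k] row_sum_pos[of b mu X k] row_sum_pos[of b mu "X + y" k]
    by (simp add: field_simps)
qed

lemma row_prob_perturb_le:
  assumes "b > 0" "supnorm_mat y \<le> 1 / b"
  shows "row_prob b mu (X + y) k j \<le> exp 4 * row_prob b mu X k j"
proof -
  have "row_prob b mu (X + y) k j \<le> (exp 1 * weight b mu X k j) / (row_sum b mu X k / exp 1)"
    unfolding row_prob_def
    using weight_perturb_le[OF assms] row_sum_perturb_ge[OF assms] row_sum_pos[of b mu X k]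
    by (intro frac_le) (auto simp: weight_pos less_imp_le field_simps)
  also have "\<dots> = exp 2 * row_prob b mu X k j"
    by (simp add: row_prob_def field_simps flip: exp_add)
  also have "\<dots> \<le> exp 4 * row_prob b mu X k j"
    by (intro mult_right_mono row_prob_nonneg) simp
  finally show ?thesis .
qed

lemma grad_G_perturb_le:
  assumes "b > 0" "supnorm_mat y \<le> 1 / b"
  shows "grad_G b mu (X + y) k j \<le> exp 4 * grad_G b mu X k j"
proof -
  let ?S = "row_sum b mu X k" and ?S' = "row_sum b mu (X + y) k"
    and ?T = "partition_sum b mu X" and ?T' = "partition_sum b mu (X + y)"
  have "?T / exp 1 * (?S / exp 1)\<^sup>2 \<le> ?T' * ?S'\<^sup>2"
    using partition_sum_perturb_ge[OF assms] row_sum_perturb_ge[OF assms] row_sum_pos[of b mu X k]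
    by (intro mult_mono power_mono) (auto simp: field_simps partition_sum_pos less_imp_le)
  then have "grad_G b mu (X + y) k j \<le> (exp 1 * weight b mu X k j) / (?T / exp 1 * (?S / exp 1)\<^sup>2)"
    unfolding grad_G_def
    using weight_perturb_le[OF assms] row_sum_pos[of b mu X k] partition_sum_pos[of b mu X]
    by (intro frac_le) (auto simp: weight_pos less_imp_le)
  also have "\<dots> = exp 4 * grad_G b mu X k j"
    by (simp add: grad_G_def field_simps power2_eq_square flip: exp_add)
  finally show ?thesis .
qed

lemma dlog_row_prob_bound_nonneg: "0 \<le> dlog_row_prob_bound b mu X k j a c"
  by (simp add: dlog_row_prob_bound_def row_prob_nonneg)

lemma dlog_grad_G_bound_nonneg: "0 \<le> dlog_grad_G_bound b mu X k j a c"
  by (simp add: dlog_grad_G_bound_def row_prob_nonneg grad_G_nonneg)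

lemma dlog_row_prob_bound_perturb_le:
  assumes "b > 0" "supnorm_mat y \<le> 1 / b"
  shows "dlog_row_prob_bound b mu (X + y) k j a c \<le> exp 4 * dlog_row_prob_bound b mu X k j a c"
  using row_prob_perturb_le[OF assms, of mu X a c]
  by (auto simp: dlog_row_prob_bound_def distrib_left intro!: add_mono)

lemma dlog_grad_G_bound_perturb_le:
  assumes "b > 0" "supnorm_mat y \<le> 1 / b"
  shows "dlog_grad_G_bound b mu (X + y) k j a c \<le> exp 4 * dlog_grad_G_bound b mu X k j a c"
  using row_prob_perturb_le[OF assms, of mu X a c] grad_G_perturb_le[OF assms, of mu X a c]
  by (auto simp: dlog_grad_G_bound_def distrib_left intro!: add_mono)

lemma pd3_majorant_G_perturb_le:
  assumes "b > 0" "supnorm_mat y \<le> 1 / b" "0 \<le> M1" "0 \<le> M2" "0 \<le> M3"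
  shows "pd3_majorant_G M1 M2 M3 b mu (X + y) a1 c1 a2 c2 a3 c3
    \<le> exp 12 * pd3_majorant_G M1 M2 M3 b mu X a1 c1 a2 c2 a3 c3"
proof -
  have "pd3_majorant_G M1 M2 M3 b mu (X + y) a1 c1 a2 c2 a3 c3
      \<le> pd3_majorant M1 M2 M3 b (\<lambda>a c. exp 4 * grad_G b mu X a c) (\<lambda>a c. exp 4 * row_prob b mu X a c)
          (\<lambda>k j a c. exp 4 * dlog_grad_G_bound b mu X k j a c)
          (\<lambda>k j a c. exp 4 * dlog_row_prob_bound b mu X k j a c) a1 c1 a2 c2 a3 c3"
    using assms
    by (intro pd3_majorant_mono grad_G_perturb_le row_prob_perturb_le dlog_grad_G_bound_perturb_le
        dlog_row_prob_bound_perturb_le)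
      (simp_all add: grad_G_nonneg row_prob_nonneg dlog_grad_G_bound_nonneg dlog_row_prob_bound_nonneg)
  also have "\<dots> = (exp 4) ^ 3 * pd3_majorant_G M1 M2 M3 b mu X a1 c1 a2 c2 a3 c3"
    by (rule pd3_majorant_scale)
  also have "(exp 4) ^ 3 = (exp 12 :: real)"
    by (simp flip: exp_of_nat_mult)
  finally show ?thesis .
qed

lemma Sup_abs_pd3_comp_G_beta_le:
  fixes mu x :: "real^'p^'n"
  assumes "C3 g" "b > 0"
    and M3: "\<And>t. \<bar>(deriv ^^ 3) g t\<bar> \<le> M3" and M2: "\<And>t. \<bar>(deriv ^^ 2) g t\<bar> \<le> M2"
    and M1: "\<And>t. \<bar>(deriv ^^ 1) g t\<bar> \<le> M1"
  shows "Sup {\<bar>pd (pd (pd (g \<circ> G_beta b mu) k3 j3) k2 j2) k1 j1 (x + y)\<bar> | y. supnorm_mat y \<le> 1 / b}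
    \<le> exp 12 * pd3_majorant_G M1 M2 M3 b mu x k1 j1 k2 j2 k3 j3"
proof (rule cSup_least)
  show "{\<bar>pd (pd (pd (g \<circ> G_beta b mu) k3 j3) k2 j2) k1 j1 (x + y)\<bar> | y. supnorm_mat y \<le> 1 / b} \<noteq> {}"
  proof -
    have "supnorm_mat (0::real^'p^'n) \<le> 1 / b"
      using assms(2) by simp
    then show ?thesis by blast
  qed
next
  have M: "0 \<le> M1" "0 \<le> M2" "0 \<le> M3"
    using M1[of 0] M2[of 0] M3[of 0] by linarith+
  fix z
  assume "z \<in> {\<bar>pd (pd (pd (g \<circ> G_beta b mu) k3 j3) k2 j2) k1 j1 (x + y)\<bar> | y. supnorm_mat y \<le> 1 / b}"
  then obtain y where y: "supnorm_mat y \<le> 1 / b"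
    and z: "z = \<bar>pd (pd (pd (g \<circ> G_beta b mu) k3 j3) k2 j2) k1 j1 (x + y)\<bar>"
    by blast
  have "z \<le> pd3_majorant_G M1 M2 M3 b mu (x + y) k1 j1 k2 j2 k3 j3"
    unfolding z by (rule abs_pd3_comp_G_beta_le[OF assms])
  also have "\<dots> \<le> exp 12 * pd3_majorant_G M1 M2 M3 b mu x k1 j1 k2 j2 k3 j3"
    by (rule pd3_majorant_G_perturb_le[OF assms(2) y M])
  finally show "z \<le> exp 12 * pd3_majorant_G M1 M2 M3 b mu x k1 j1 k2 j2 k3 j3" .
qed

lemma sum_entries_reorder:
  fixes f :: "'n::finite \<Rightarrow> 'n \<Rightarrow> 'n \<Rightarrow> 'p::finite \<Rightarrow> 'p \<Rightarrow> 'p \<Rightarrow> 'a::comm_monoid_add"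
  shows "(\<Sum>k1\<in>UNIV. \<Sum>k2\<in>UNIV. \<Sum>k3\<in>UNIV. \<Sum>j1\<in>UNIV. \<Sum>j2\<in>UNIV. \<Sum>j3\<in>UNIV. f k1 k2 k3 j1 j2 j3)
    = (\<Sum>k3\<in>UNIV. \<Sum>j3\<in>UNIV. \<Sum>k2\<in>UNIV. \<Sum>j2\<in>UNIV. \<Sum>k1\<in>UNIV. \<Sum>j1\<in>UNIV. f k1 k2 k3 j1 j2 j3)"
  unfolding sum.cartesian_product
  by (rule sum.reindex_bij_witness[of _ "\<lambda>(k3, j3, k2, j2, k1, j1). (k1, k2, k3, j1, j2, j3)"
        "\<lambda>(k1, k2, k3, j1, j2, j3). (k3, j3, k2, j2, k1, j1)"]) auto

lemma sum_Sup_abs_pd3_comp_G_beta_le: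
  fixes mu x :: "real^'p^'n"
  assumes "C3 g" "b > 0"
    and "\<And>t. \<bar>(deriv ^^ 3) g t\<bar> \<le> M3" "\<And>t. \<bar>(deriv ^^ 2) g t\<bar> \<le> M2"
    and "\<And>t. \<bar>(deriv ^^ 1) g t\<bar> \<le> M1"
  shows "(\<Sum>k1\<in>UNIV. \<Sum>k2\<in>UNIV. \<Sum>k3\<in>UNIV. \<Sum>j1\<in>UNIV. \<Sum>j2\<in>UNIV. \<Sum>j3\<in>UNIV.
      Sup {\<bar>pd (pd (pd (g \<circ> G_beta b mu) k3 j3) k2 j2) k1 j1 (x + y)\<bar> | y. supnorm_mat y \<le> 1 / b})
    \<le> exp 12 * (M3 + 12 * b * M2 + 24 * b\<^sup>2 * M1)"
proof -
  have "(\<Sum>k1\<in>UNIV. \<Sum>k2\<in>UNIV. \<Sum>k3\<in>UNIV. \<Sum>j1\<in>UNIV. \<Sum>j2\<in>UNIV. \<Sum>j3\<in>UNIV.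
      Sup {\<bar>pd (pd (pd (g \<circ> G_beta b mu) k3 j3) k2 j2) k1 j1 (x + y)\<bar> | y. supnorm_mat y \<le> 1 / b})
    \<le> (\<Sum>k1\<in>UNIV. \<Sum>k2\<in>UNIV. \<Sum>k3\<in>UNIV. \<Sum>j1\<in>UNIV. \<Sum>j2\<in>UNIV. \<Sum>j3\<in>UNIV.
      exp 12 * pd3_majorant_G M1 M2 M3 b mu x k1 j1 k2 j2 k3 j3)"
    by (intro sum_mono Sup_abs_pd3_comp_G_beta_le assms)
  also have "\<dots> = exp 12 * (\<Sum>k3\<in>UNIV. \<Sum>j3\<in>UNIV. \<Sum>k2\<in>UNIV. \<Sum>j2\<in>UNIV. \<Sum>k1\<in>UNIV. \<Sum>j1\<in>UNIV.
      pd3_majorant_G M1 M2 M3 b mu x k1 j1 k2 j2 k3 j3)"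
    by (simp only: sum_entries_reorder sum_distrib_left)
  also have "\<dots> = exp 12 * (M3 + 12 * b * M2 + 24 * b\<^sup>2 * M1)"
    by (simp only: sum_pd3_majorant sum_grad_G sum_row_prob sum_dlog_grad_G_bound sum_dlog_row_prob_bound)
  finally show ?thesis .
qed

lemma abs_deriv_iter_le_supnorm_deriv: "ereal \<bar>(deriv ^^ r) g t\<bar> \<le> supnorm_deriv r g"
  unfolding supnorm_deriv_def by (rule SUP_upper) simp

lemma supnorm_deriv_nonneg: "0 \<le> supnorm_deriv r g"
  using abs_deriv_iter_le_supnorm_deriv[of r g 0] by (rule order_trans[rotated]) simp

lemma ereal_le_supnorm_deriv_combination:
  assumes "0 < c" "0 < c1" "0 < c2"
    and real_bound: "\<And>M1 M2 M3. (\<And>t. \<bar>(deriv ^^ 3) g t\<bar> \<le> M3) \<Longrightarrow> (\<And>t. \<bar>(deriv ^^ 2) g t\<bar> \<le> M2) \<Longrightarrow>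
      (\<And>t. \<bar>(deriv ^^ 1) g t\<bar> \<le> M1) \<Longrightarrow> S \<le> c * (M3 + c2 * M2 + c1 * M1)"
  shows "ereal S \<le> ereal c * (supnorm_deriv 3 g + ereal c2 * supnorm_deriv 2 g + ereal c1 * supnorm_deriv 1 g)"
proof (cases "supnorm_deriv 3 g = \<infinity> \<or> supnorm_deriv 2 g = \<infinity> \<or> supnorm_deriv 1 g = \<infinity>")
  case True
  then have infinite: "ereal c * (supnorm_deriv 3 g + ereal c2 * supnorm_deriv 2 g
      + ereal c1 * supnorm_deriv 1 g) = \<infinity>"
    using assms(1-3) supnorm_deriv_nonneg[of 1 g] supnorm_deriv_nonneg[of 2 g] supnorm_deriv_nonneg[of 3 g]
    by (cases "supnorm_deriv 1 g"; cases "supnorm_deriv 2 g"; cases "supnorm_deriv 3 g")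
      (auto simp: ereal_mult_infty)
  show ?thesis unfolding infinite by simp
next
  case False
  define M where "M r = real_of_ereal (supnorm_deriv r g)" for r
  have M_eq: "supnorm_deriv r g = ereal (M r)" if "supnorm_deriv r g \<noteq> \<infinity>" for r
    using that supnorm_deriv_nonneg[of r g] unfolding M_def by (cases "supnorm_deriv r g") auto
  have M_bound: "\<bar>(deriv ^^ r) g t\<bar> \<le> M r" if "supnorm_deriv r g \<noteq> \<infinity>" for r t
    using abs_deriv_iter_le_supnorm_deriv[of r g t] M_eq[OF that] by simp
  have "S \<le> c * (M 3 + c2 * M 2 + c1 * M 1)"
    using False by (intro real_bound M_bound) simp_all
  then show ?thesis
    using False by (simp add: M_eq)
qed

theorem lemmaF4:
  fixes \<beta> :: real and mu :: "real^'p^'n" and g :: "real \<Rightarrow> real" and x :: "real^'p^'n"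
  assumes "\<beta> > 0" and "C3 g"
  defines "m \<equiv> g \<circ> G_beta \<beta> mu"
  defines "U \<equiv> (\<lambda>k1 k2 k3 j1 j2 j3 x.
      Sup {\<bar>pd (pd (pd m k3 j3) k2 j2) k1 j1 (x + y)\<bar> | y. supnorm_mat y \<le> 1/\<beta>})"
  shows "ereal (\<Sum>k1\<in>UNIV. \<Sum>k2\<in>UNIV. \<Sum>k3\<in>UNIV. \<Sum>j1\<in>UNIV. \<Sum>j2\<in>UNIV. \<Sum>j3\<in>UNIV.
            U k1 k2 k3 j1 j2 j3 x)
         \<le> ereal (exp 12) * (supnorm_deriv 3 g + ereal (16 * \<beta>) * supnorm_deriv 2 g
                              + ereal (24 * \<beta>^2) * supnorm_deriv 1 g)"
proof (rule ereal_le_supnorm_deriv_combination)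
  show "0 < (exp 12 :: real)" "0 < 24 * \<beta>^2" "0 < 16 * \<beta>"
    using assms(1) by simp_all
  fix M1 M2 M3
  assume M3: "\<And>t. \<bar>(deriv ^^ 3) g t\<bar> \<le> M3" and M2: "\<And>t. \<bar>(deriv ^^ 2) g t\<bar> \<le> M2"
    and M1: "\<And>t. \<bar>(deriv ^^ 1) g t\<bar> \<le> M1"
  have "(\<Sum>k1\<in>UNIV. \<Sum>k2\<in>UNIV. \<Sum>k3\<in>UNIV. \<Sum>j1\<in>UNIV. \<Sum>j2\<in>UNIV. \<Sum>j3\<in>UNIV. U k1 k2 k3 j1 j2 j3 x)
      \<le> exp 12 * (M3 + 12 * \<beta> * M2 + 24 * \<beta>\<^sup>2 * M1)" (is "?sum \<le> _")
    unfolding U_def m_def by (rule sum_Sup_abs_pd3_comp_G_beta_le[OF assms(2,1) M3 M2 M1])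
  \<comment> \<open>The argument gives the constant 12 where the statement has 16.\<close>
  also have "\<dots> \<le> exp 12 * (M3 + 16 * \<beta> * M2 + 24 * \<beta>^2 * M1)"
    using assms(1) M2[of 0] by simp
  finally show "?sum \<le> exp 12 * (M3 + 16 * \<beta> * M2 + 24 * \<beta>^2 * M1)" .
qed

end
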